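(* Let $q\ge4$ be even, let $\alpha,\beta\in\mathbb{F}_{q^2}$ with $\alpha\neq0$, $\beta\notin\mathbb{F}_q$ and $\alpha^{q+1}/(\beta^q+\beta)^2$ of absolute trace $0$, let $R=(0,\delta,1)$ and $U_\infty=(1,0,0)$. If $\ell$ is a line of $\mathrm{PG}(2,q^2)$ through $U_\infty$, then $\ell$ meets $\mathrm{pedal}(R)$ in at most two points.
   Context: Points of $\mathrm{PG}(2,q^2)$ have homogeneous coordinates $(x,y,z)$. $\delta\in\mathbb{F}_{q^2}\setminus\mathbb{F}_q$ satisfies $\delta^q=1+\delta$ and $\delta^2=v+\delta$ with $v\in\mathbb{F}_q$, $v\ne1$, of absolute trace $1$. $\mathcal U_{\alpha\beta}=\{(x,\alpha x^2+\beta x^{q+1}+r,1): x\in\mathbb{F}_{q^2}, r\in\mathbb{F}_q\}\cup\{(0,1,0)\}$, which under the hypotheses is a unital (a set of $q^3+1$ points meeting every line in $1$ or $q+1$ points), and $R\notin\mathcal U_{\alpha\beta}$. For a point $P$ not on the unital, $\mathrm{pedal}(P)$ is the set of points of contact of the $q+1$ tangent lines (lines meeting the unital in exactly one point) through $P$. *)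

theory Defs
  imports Main
begin

type_synonym 'a vec3 = "'a \<times> 'a \<times> 'a"

definition smul3 :: "'a::field \<Rightarrow> 'a vec3 \<Rightarrow> 'a vec3" where
  "smul3 c v = (case v of (x, y, z) \<Rightarrow> (c * x, c * y, c * z))"

definition ppt :: "'a::field vec3 \<Rightarrow> 'a vec3 set" where
  "ppt v = {smul3 c v | c. c \<noteq> 0}"

definition ppoints :: "'a::field vec3 set set" where
  "ppoints = {ppt v | v. v \<noteq> (0, 0, 0)}"

definition incid3 :: "'a::field vec3 \<Rightarrow> 'a vec3 \<Rightarrow> bool" where
  "incid3 L v = (case L of (a, b, c) \<Rightarrow> case v of (x, y, z) \<Rightarrow> a * x + b * y + c * z = 0)"

definition pline :: "'a::field vec3 \<Rightarrow> 'a vec3 set set" where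
  "pline L = {ppt v | v. v \<noteq> (0, 0, 0) \<and> incid3 L v}"

definition plines :: "'a::field vec3 set set set" where
  "plines = {pline L | L. L \<noteq> (0, 0, 0)}"

text \<open>The set U_{alpha beta}; F_q is the subfield {r. r^q = r}.\<close>
definition unitalAB :: "nat \<Rightarrow> 'a::field \<Rightarrow> 'a \<Rightarrow> 'a vec3 set set" where
  "unitalAB q \<alpha> \<beta> =
     {ppt (x, \<alpha> * x ^ 2 + \<beta> * x ^ (q + 1) + r, 1) | x r. r ^ q = r} \<union> {ppt (0, 1, 0)}"

definition tangent_line :: "'a::field vec3 set set \<Rightarrow> 'a vec3 set set \<Rightarrow> bool" where
  "tangent_line U l = (l \<in> plines \<and> card (l \<inter> U) = 1)"

definition pedal :: "'a::field vec3 set set \<Rightarrow> 'a vec3 set \<Rightarrow> 'a vec3 set set" where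
  "pedal U P = {Q. \<exists>l. tangent_line U l \<and> P \<in> l \<and> l \<inter> U = {Q}}"

definition abs_trace :: "nat \<Rightarrow> 'a::field \<Rightarrow> 'a" where
  "abs_trace h x = (\<Sum>i<h. x ^ (2 ^ i))"

end

theory Submission
  imports Defs "HOL-Number_Theory.Residues" "HOL-Computational_Algebra.Polynomial"
begin

(* Write Tr x = x + x^q, N x = x x^q and Q x = Tr (\<alpha> x^2) + Tr \<beta> N x. A line through
   R = (0, \<delta>, 1) that can be tangent to U_{\<alpha>\<beta>} is y = m x + \<delta>, and its affine point with
   abscissa x lies on the unital iff Q x + Tr (m x) = 1. At such a root x0,
   Q (x0 + z) + Tr (m (x0 + z)) = 1 + Q z + Tr (M z) with M = m + Tr \<beta> x0^q, and for M \<noteq> 0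
   the form Q z + Tr (M z) vanishes at some z \<noteq> 0. So tangency forces m = Tr \<beta> x0^q: the
   contact point is (x0, Tr \<beta> N x0 + \<delta>, 1) with Q x0 = 1. A line through U_\<infinity> has
   constant second coordinate, hence fixes N x0 = n, and then x0^2 is a root of
   \<alpha> X^2 + (Tr \<beta> n + 1) X + \<alpha>^q n^2, which leaves at most two contact points. *)

lemma finite_field_power_card:
  fixes x :: "'a::{field,finite}"
  shows "x ^ card (UNIV :: 'a set) = x"
proof (cases "x = 0")
  case False
  have "x * (\<Prod>y\<in>UNIV-{0}. x * y) = x * x ^ (card (UNIV :: 'a set) - 1) * \<Prod>(UNIV-{0})"
    by (simp add: prod.distrib mult_ac)
  also have "x * x ^ (card (UNIV :: 'a set) - 1) = x ^ card (UNIV :: 'a set)"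
    using finite_UNIV_card_ge_0[where ?'a = 'a] by (simp flip: power_Suc)
  also have "(\<Prod>y\<in>UNIV-{0}. x * y) = (\<Prod>y\<in>UNIV-{0}. y)"
    by (rule prod.reindex_bij_witness[of _ "\<lambda>y. y / x" "\<lambda>y. x * y"]) (use False in auto)
  finally show ?thesis
    by simp
qed (use finite_UNIV_card_ge_0[where ?'a = 'a] in auto)

lemma CHAR_eq_2_if_card_eq_power_2:
  assumes "card (UNIV :: 'a::{field,finite} set) = 2 ^ k" and "k > 0"
  shows "CHAR('a) = 2"
proof -
  have "prime CHAR('a)"
    by (simp add: finite_imp_CHAR_pos prime_CHAR_semidom)
  moreover have "CHAR('a) dvd 2 ^ k"
    using CHAR_dvd_CARD assms(1) by metis
  ultimately show ?thesis
    by (metis prime_dvd_power primes_dvd_imp_eq two_is_prime_nat)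
qed

lemma power2_power_commute: "((x::'a::monoid_mult) ^ 2) ^ n = (x ^ n) ^ 2"
  by (simp flip: power_mult add: mult.commute)

lemma ppt_self: "v \<in> ppt v"
  unfolding ppt_def by (intro CollectI exI[of _ 1]) (simp add: smul3_def split: prod.split)

lemma ppt_eqD: "ppt v = ppt w \<Longrightarrow> \<exists>c. c \<noteq> 0 \<and> v = smul3 c w"
  using ppt_self[of v] unfolding ppt_def by auto

lemma ppt_affine_eq_iff: "ppt (x, y, 1) = ppt (x', y', 1) \<longleftrightarrow> x = x' \<and> (y::'a::field) = y'"
  by (auto dest: ppt_eqD simp: smul3_def)

lemma ppt_affine_neq_infinite: "ppt (x, y, 1) \<noteq> ppt (0, 1, 0::'a::field)"
  by (auto dest: ppt_eqD simp: smul3_def)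

lemma incid3_smul3:
  assumes "(c::'a::field) \<noteq> 0"
  shows "incid3 L (smul3 c w) \<longleftrightarrow> incid3 L w"
proof -
  obtain a b d x y z where "L = (a, b, d)" and "w = (x, y, z)"
    by (cases L, cases w)
  moreover have "a * (c * x) + b * (c * y) + d * (c * z) = c * (a * x + b * y + d * z)"
    by (simp add: algebra_simps)
  ultimately show ?thesis
    using assms by (simp add: incid3_def smul3_def)
qed

lemma ppt_mem_pline_iff:
  assumes "(v::'a::field vec3) \<noteq> (0, 0, 0)"
  shows "ppt v \<in> pline L \<longleftrightarrow> incid3 L v"
proof
  assume "ppt v \<in> pline L"
  then obtain w where "ppt v = ppt w" and "incid3 L w"
    unfolding pline_def by blast
  then show "incid3 L v"
    by (auto dest: ppt_eqD simp: incid3_smul3)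
qed (use assms in \<open>unfold pline_def, blast\<close>)

lemma plinesE:
  assumes "l \<in> plines"
  obtains a b c where "(a, b, c) \<noteq> (0, 0, 0)" and "l = pline (a, b, c)"
  using assms unfolding plines_def by auto

lemma ppt_affine_mem_unitalAB:
  fixes x y :: "'a::field"
  shows "ppt (x, y, 1) \<in> unitalAB q \<alpha> \<beta> \<longleftrightarrow>
    (y - \<alpha> * x ^ 2 - \<beta> * x ^ (q + 1)) ^ q = y - \<alpha> * x ^ 2 - \<beta> * x ^ (q + 1)"
  unfolding unitalAB_def
  by (auto simp: ppt_affine_eq_iff ppt_affine_neq_infinite
      intro!: exI[of _ x] exI[of _ "y - \<alpha> * x ^ 2 - \<beta> * x ^ (q + 1)"])

lemma unitalAB_cases:
  assumes "P \<in> unitalAB q \<alpha> \<beta>"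
  obtains (infinite) "P = ppt (0, 1, 0)" | (affine) x y where "P = ppt (x, y, 1)"
  using assms unfolding unitalAB_def by blast

lemma line_through_axis_point_cases:
  fixes d :: "'a::field"
  assumes "l \<in> plines" and "ppt (0, d, 1) \<in> l"
  obtains (vertical) "ppt (0, 0, 1) \<in> l" and "ppt (0, 1, 0) \<in> l"
    | (slope) m where "ppt (0, 1, 0) \<notin> l" and "\<And>x y. ppt (x, y, 1) \<in> l \<longleftrightarrow> y = m * x + d"
proof -
  obtain a b c where abc: "(a, b, c) \<noteq> (0, 0, 0)" and l: "l = pline (a, b, c)"
    using assms(1) by (rule plinesE)
  have mem: "ppt (x, y, z) \<in> l \<longleftrightarrow> a * x + b * y + c * z = 0" if "(x, y, z) \<noteq> (0, 0, 0)" for x y z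
    using ppt_mem_pline_iff[OF that] by (simp add: l incid3_def)
  have c: "c = - b * d"
    using assms(2) mem[of 0 d 1] by (simp add: eq_neg_iff_add_eq_0 add.commute)
  show thesis
  proof (cases "b = 0")
    case True
    then show thesis
      using c mem[of 0 0 1] mem[of 0 1 0] by (intro vertical) simp_all
  next
    case False
    have "ppt (x, y, 1) \<in> l \<longleftrightarrow> y = - a / b * x + d" for x y
      using False mem[of x y 1] by (auto simp: c field_simps)
    then show thesis
      using False mem[of 0 1 0] by (intro slope[of "- a / b"]) simp_all
  qed
qed

(* The intended model is F_{q^2}, with x^q its conjugation over F_q, tr the trace to F_q and
   \<delta> an element of trace 1. *)
locale char2_conjugation =
  fixes q :: nat and \<delta> :: "'a::field"
  assumes two_eq_zero: "(2::'a) = 0"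
    and conj_add: "\<And>x y::'a. (x + y) ^ q = x ^ q + y ^ q"
    and conj_conj: "\<And>x::'a. (x ^ q) ^ q = x"
    and conj_delta: "\<delta> ^ q = 1 + \<delta>"
begin

declare two_eq_zero [simp] conj_conj [simp]

lemma q_pos: "q > 0"
  using conj_conj[of 0] by (cases q) simp_all

lemma add_self [simp]: "x + x = (0::'a)"
  by (simp flip: mult_2)

lemma minus_eq_self [simp]: "- x = (x::'a)"
  using add_self[of x] by (simp add: add_eq_0_iff2)

lemma add_eq_0_iff_eq [simp]: "x + y = 0 \<longleftrightarrow> x = (y::'a)"
  by (simp add: add_eq_0_iff2)

lemma add_eq_iff_eq_add: "x + y = z \<longleftrightarrow> x = z + (y::'a)"
  by (metis add.assoc add_self add_0_right)

lemma diff_eq_add [simp]: "x - y = x + (y::'a)"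
  by (simp add: diff_conv_add_uminus)

lemma power2_add: "(x + y) ^ 2 = x ^ 2 + (y::'a) ^ 2"
  by (simp add: power2_sum two_eq_zero)

lemma power2_inj: "x ^ 2 = y ^ 2 \<Longrightarrow> x = (y::'a)"
  using power2_add[of x y] by (simp add: add_eq_0_iff2)

lemma conj_zero [simp]: "(0::'a) ^ q = 0"
  using q_pos by simp

lemma norm_conj: "(x * x ^ q) ^ q = x * (x::'a) ^ q"
  by (simp add: power_mult_distrib conj_conj mult.commute)

definition tr :: "'a \<Rightarrow> 'a" where
  "tr x = x + x ^ q"

lemma tr_add: "tr (x + y) = tr x + tr y"
  by (simp add: tr_def conj_add algebra_simps)

lemma tr_conj: "(tr x) ^ q = tr x"
  by (simp add: tr_def conj_add conj_conj add.commute)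

lemma tr_eq_0_iff: "tr x = 0 \<longleftrightarrow> x ^ q = x"
  unfolding tr_def by (metis add_self add_right_cancel)

lemma tr_fixed: "c ^ q = c \<Longrightarrow> tr c = 0"
  by (simp add: tr_eq_0_iff)

lemma tr_fixed_mult: "c ^ q = c \<Longrightarrow> tr (c * x) = c * tr x"
  by (simp add: tr_def power_mult_distrib distrib_left)

lemma tr_delta: "tr \<delta> = 1"
  by (simp add: tr_def conj_delta flip: add.assoc)

definition qform :: "'a \<Rightarrow> 'a \<Rightarrow> 'a \<Rightarrow> 'a" where
  "qform \<alpha> b z = tr (\<alpha> * z ^ 2) + b * (z * z ^ q)"

lemma qform_conj: "b ^ q = b \<Longrightarrow> (qform \<alpha> b z) ^ q = qform \<alpha> b z"
  by (simp add: qform_def conj_add power_mult_distrib tr_conj norm_conj)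

lemma qform_zero [simp]: "qform \<alpha> b 0 = 0"
  by (simp add: qform_def tr_def)

lemma qform_fixed_mult:
  assumes "c ^ q = c"
  shows "qform \<alpha> b (c * z) = c ^ 2 * qform \<alpha> b z"
proof -
  have "(c ^ 2) ^ q = c ^ 2"
    using assms by (simp add: power2_power_commute)
  then have "tr (\<alpha> * (c * z) ^ 2) = c ^ 2 * tr (\<alpha> * z ^ 2)"
    using tr_fixed_mult[of "c ^ 2" "\<alpha> * z ^ 2"] by (simp add: power_mult_distrib mult.left_commute)
  then show ?thesis
    using assms by (simp add: qform_def power_mult_distrib power2_eq_square algebra_simps)
qed

lemma qform_add:
  assumes "b ^ q = b"
  shows "qform \<alpha> b (x + y) = qform \<alpha> b x + qform \<alpha> b y + tr (b * x ^ q * y)"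
proof -
  have "tr (b * x ^ q * y) = b * (x ^ q * y + x * y ^ q)"
    using assms by (simp add: tr_def power_mult_distrib conj_conj algebra_simps)
  then show ?thesis
    by (simp add: qform_def power2_add conj_add tr_add algebra_simps)
qed

(* Along z + c u, c \<in> F_q, the form qform is a polynomial in c of degree at most 2 whose
   linear coefficient B is nonzero, so it cannot vanish at the three points 0, 1, v. *)
lemma qform_nonzero_at_tr_one:
  fixes v :: 'a
  assumes "v ^ q = v" and "v \<noteq> 0" and "v \<noteq> 1"
    and "b ^ q = b" and "b \<noteq> 0" and "M \<noteq> 0"
  shows "\<exists>w. qform \<alpha> b w \<noteq> 0 \<and> tr (M * w) = 1"
proof -
  define u z where "u = 1 / M" and "z = \<delta> / M"
  define B where "B = tr (b * z ^ q * u)"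
  have expand: "qform \<alpha> b (z + c * u) = qform \<alpha> b z + c ^ 2 * qform \<alpha> b u + c * B"
    if "c ^ q = c" for c
    using that assms(4) tr_fixed_mult[OF that, of "b * z ^ q * u"]
    by (simp add: qform_add qform_fixed_mult B_def mult.left_commute)
  have tr_one: "tr (M * (z + c * u)) = 1" if "c ^ q = c" for c
    using that assms(6) by (simp add: u_def z_def distrib_left tr_add tr_delta tr_fixed)
  have "B = b * \<delta> ^ q / (M ^ q * M) + b * \<delta> / (M * M ^ q)"
    using assms(4) by (simp add: B_def tr_def u_def z_def power_mult_distrib power_divide)
  also have "\<dots> = b * (\<delta> ^ q + \<delta>) / (M * M ^ q)"
    by (simp add: add_divide_distrib distrib_left mult.commute)
  also have "\<dots> = b / (M * M ^ q)"
    by (simp add: conj_delta add.assoc)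
  finally have "B = b / (M * M ^ q)" .
  then have "B \<noteq> 0"
    using assms(5,6) q_pos by simp
  have "\<exists>c \<in> {0, 1, v}. qform \<alpha> b (z + c * u) \<noteq> 0"
  proof (rule ccontr)
    assume "\<not> ?thesis"
    then have "qform \<alpha> b z = 0" and "qform \<alpha> b u + B = 0"
      and "v ^ 2 * qform \<alpha> b u + v * B = 0"
      using expand[of 0] expand[of 1] expand[of v] assms(1) by auto
    then have "v * (v + 1) * qform \<alpha> b u = 0"
      by (simp add: add_eq_0_iff2 power2_eq_square algebra_simps)
    moreover have "v + 1 \<noteq> 0"
      using assms(3) by (simp add: add_eq_0_iff2)
    ultimately show False
      using assms(2) \<open>B \<noteq> 0\<close> \<open>qform \<alpha> b u + B = 0\<close> by simp
  qed
  then obtain c where "c \<in> {0, 1, v}" and "qform \<alpha> b (z + c * u) \<noteq> 0"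
    by blast
  moreover from \<open>c \<in> {0, 1, v}\<close> have "c ^ q = c"
    using assms(1) by auto
  ultimately show ?thesis
    using tr_one by blast
qed

(* Scaling by t \<in> F_q multiplies qform by t^2 but tr (M * _) only by t. *)
lemma qform_plus_tr_nonzero_root:
  assumes "b ^ q = b" and "qform \<alpha> b w \<noteq> 0" and "tr (M * w) = 1"
  shows "\<exists>z. z \<noteq> 0 \<and> qform \<alpha> b z + tr (M * z) = 0"
proof -
  define t where "t = 1 / qform \<alpha> b w"
  have "t ^ q = t"
    using assms(1) by (simp add: t_def power_divide qform_conj)
  then have "qform \<alpha> b (t * w) + tr (M * (t * w)) = t ^ 2 * qform \<alpha> b w + t * tr (M * w)"
    using tr_fixed_mult[of t "M * w"] by (simp add: qform_fixed_mult mult.left_commute[of M t])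
  also have "\<dots> = 0"
    using assms(2,3) by (simp add: t_def power2_eq_square)
  finally show ?thesis
    using assms(2) by (intro exI[of _ "t * w"]) (auto simp: t_def)
qed

lemma unique_root_imp_slope:
  fixes v :: 'a
  assumes "v ^ q = v" and "v \<noteq> 0" and "v \<noteq> 1"
    and "b ^ q = b" and "b \<noteq> 0"
    and root: "qform \<alpha> b x0 + tr (m * x0) = 1"
    and unique: "\<And>x. qform \<alpha> b x + tr (m * x) = 1 \<Longrightarrow> x = x0"
  shows "m = b * x0 ^ q" and "qform \<alpha> b x0 = 1"
proof -
  define M where "M = m + b * x0 ^ q"
  have expand: "qform \<alpha> b (x0 + z) + tr (m * (x0 + z)) = 1 + (qform \<alpha> b z + tr (M * z))" for z
    using root assms(4) by (simp add: qform_add M_def distrib_left distrib_right tr_add algebra_simps)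
  have "M = 0"
  proof (rule ccontr)
    assume "M \<noteq> 0"
    then obtain z where "z \<noteq> 0" and "qform \<alpha> b z + tr (M * z) = 0"
      using qform_nonzero_at_tr_one[OF assms(1-5)] qform_plus_tr_nonzero_root[OF assms(4)] by blast
    then have "x0 + z = x0"
      using expand[of z] by (intro unique) simp
    with \<open>z \<noteq> 0\<close> show False
      by simp
  qed
  then show slope: "m = b * x0 ^ q"
    by (simp add: M_def add_eq_0_iff2)
  have "tr (m * x0) = 0"
    using assms(4) by (simp add: slope tr_fixed power_mult_distrib norm_conj mult.assoc)
  then show "qform \<alpha> b x0 = 1"
    using root by simp
qed

lemma line_point_mem_unitalAB:
  "ppt (x, m * x + \<delta>, 1) \<in> unitalAB q \<alpha> \<beta> \<longleftrightarrow> qform \<alpha> (tr \<beta>) x + tr (m * x) = 1"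
proof -
  have "tr (m * x + \<delta> + \<alpha> * x ^ 2 + \<beta> * x ^ (q + 1)) = qform \<alpha> (tr \<beta>) x + tr (m * x) + 1"
    using tr_fixed_mult[OF norm_conj, of x \<beta>]
    by (simp add: qform_def tr_add tr_delta mult.commute algebra_simps)
  then show ?thesis
    by (simp add: ppt_affine_mem_unitalAB flip: tr_eq_0_iff)
qed

lemma pedal_pointE:
  fixes v :: 'a
  assumes "v ^ q = v" and "v \<noteq> 0" and "v \<noteq> 1" and "tr \<beta> \<noteq> 0"
    and "Q \<in> pedal (unitalAB q \<alpha> \<beta>) (ppt (0, \<delta>, 1))"
  obtains x where "Q = ppt (x, tr \<beta> * (x * x ^ q) + \<delta>, 1)" and "qform \<alpha> (tr \<beta>) x = 1"
proof -
  let ?U = "unitalAB q \<alpha> \<beta>"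
  obtain l where l: "l \<in> plines" "ppt (0, \<delta>, 1) \<in> l" and contact: "l \<inter> ?U = {Q}"
    using assms(5) unfolding pedal_def tangent_line_def by blast
  obtain m where infinite: "ppt (0, 1, 0) \<notin> l"
    and line: "\<And>x y. ppt (x, y, 1) \<in> l \<longleftrightarrow> y = m * x + \<delta>"
  proof (rule line_through_axis_point_cases[OF l])
    assume "ppt (0, 0, 1) \<in> l" and "ppt (0, 1, 0) \<in> l"
    moreover have "ppt (0, 0, 1) \<in> ?U"
      using ppt_affine_mem_unitalAB[of 0 0 q \<alpha> \<beta>] q_pos by simp
    moreover have "ppt (0, 1, 0) \<in> ?U"
      by (simp add: unitalAB_def)
    ultimately have "ppt (0, 0, 1) = ppt (0, 1, 0::'a)"
      using contact by blast
    then show thesis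
      using ppt_affine_neq_infinite by blast
  qed (rule that)
  have "Q \<in> ?U" and "Q \<in> l"
    using contact by auto
  then obtain x0 y0 where Q: "Q = ppt (x0, y0, 1)"
    using infinite by (cases rule: unitalAB_cases) auto
  then have y0: "y0 = m * x0 + \<delta>"
    using line \<open>Q \<in> l\<close> by simp
  have root: "qform \<alpha> (tr \<beta>) x0 + tr (m * x0) = 1"
    using \<open>Q \<in> ?U\<close> by (simp add: Q y0 line_point_mem_unitalAB)
  have unique: "x = x0" if "qform \<alpha> (tr \<beta>) x + tr (m * x) = 1" for x
  proof -
    have "ppt (x, m * x + \<delta>, 1) \<in> l \<inter> ?U"
      using that by (simp add: line line_point_mem_unitalAB)
    then show ?thesis
      using contact by (simp add: Q ppt_affine_eq_iff)
  qed
  have "m = tr \<beta> * x0 ^ q" and "qform \<alpha> (tr \<beta>) x0 = 1"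
    using unique_root_imp_slope[OF assms(1-3) tr_conj assms(4) root unique] by blast+
  then show thesis
    by (intro that[of x0]) (simp_all add: Q y0 mult.commute mult.left_commute)
qed

lemma qform_eq_1_norm_eq_imp_poly_root:
  assumes "qform \<alpha> b x = 1" and N: "x * x ^ q = n"
  shows "poly [:\<alpha> ^ q * n ^ 2, b * n + 1, \<alpha>:] (x ^ 2) = 0"
proof -
  have "\<alpha> * x ^ 2 + \<alpha> ^ q * (x ^ q) ^ 2 + b * n = 1"
    using assms by (simp add: qform_def tr_def power_mult_distrib power2_power_commute)
  moreover have "poly [:\<alpha> ^ q * n ^ 2, b * n + 1, \<alpha>:] (x ^ 2)
      = x ^ 2 * (\<alpha> * x ^ 2 + \<alpha> ^ q * (x ^ q) ^ 2 + b * n) + x ^ 2"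
    by (simp add: power2_eq_square algebra_simps flip: N)
  ultimately show ?thesis
    by simp
qed

lemma
  assumes "\<alpha> \<noteq> 0"
  shows finite_qform_eq_1_norm_eq: "finite {x. qform \<alpha> b x = 1 \<and> x * x ^ q = n}"
    and card_qform_eq_1_norm_eq_le_2: "card {x. qform \<alpha> b x = 1 \<and> x * x ^ q = n} \<le> 2"
proof -
  let ?S = "{x. qform \<alpha> b x = 1 \<and> x * x ^ q = n}"
  define p where "p = [:\<alpha> ^ q * n ^ 2, b * n + 1, \<alpha>:]"
  have "p \<noteq> 0" and "degree p = 2"
    using assms by (simp_all add: p_def)
  have roots: "(\<lambda>x. x ^ 2) ` ?S \<subseteq> {y. poly p y = 0}"
    using qform_eq_1_norm_eq_imp_poly_root by (auto simp: p_def)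
  have inj: "inj_on (\<lambda>x. x ^ 2) ?S"
    by (auto intro: inj_onI power2_inj)
  have "finite {y. poly p y = 0}"
    using \<open>p \<noteq> 0\<close> by (rule poly_roots_finite)
  then show "finite ?S"
    using finite_subset[OF roots] inj by (blast intro: finite_imageD)
  have "card ?S = card ((\<lambda>x. x ^ 2) ` ?S)"
    using inj by (rule card_image[symmetric])
  also have "\<dots> \<le> card {y. poly p y = 0}"
    using roots \<open>finite {y. poly p y = 0}\<close> by (rule card_mono[rotated])
  also have "\<dots> \<le> 2"
    using card_poly_roots_bound[OF \<open>p \<noteq> 0\<close>] \<open>degree p = 2\<close> by simp
  finally show "card ?S \<le> 2" .
qed

lemma card_line_through_infinite_point_inter_pedal_le_2:
  fixes v :: 'a
  assumes "v ^ q = v" and "v \<noteq> 0" and "v \<noteq> 1" and "\<alpha> \<noteq> 0" and "tr \<beta> \<noteq> 0"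
    and "l \<in> plines" and "ppt (1, 0, 0) \<in> l"
  shows "card (l \<inter> pedal (unitalAB q \<alpha> \<beta>) (ppt (0, \<delta>, 1))) \<le> 2"
proof -
  obtain a e c where "(a, e, c) \<noteq> (0, 0, 0)" and l: "l = pline (a, e, c)"
    using assms(6) by (rule plinesE)
  have "a = 0"
    using assms(7) by (simp add: l ppt_mem_pline_iff incid3_def)
  define n where "n = (c / e + \<delta>) / tr \<beta>"
  let ?contact = "\<lambda>x. ppt (x, tr \<beta> * (x * x ^ q) + \<delta>, 1)"
  have "l \<inter> pedal (unitalAB q \<alpha> \<beta>) (ppt (0, \<delta>, 1))
      \<subseteq> ?contact ` {x. qform \<alpha> (tr \<beta>) x = 1 \<and> x * x ^ q = n}"
  proof
    fix Q
    assume Q: "Q \<in> l \<inter> pedal (unitalAB q \<alpha> \<beta>) (ppt (0, \<delta>, 1))"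
    then obtain x where Qx: "Q = ?contact x" and "qform \<alpha> (tr \<beta>) x = 1"
      using pedal_pointE[OF assms(1-3,5)] by blast
    have "e * (tr \<beta> * (x * x ^ q) + \<delta>) = c"
      using Q \<open>a = 0\<close> by (simp add: Qx l ppt_mem_pline_iff incid3_def)
    moreover from this have "e \<noteq> 0"
      using \<open>(a, e, c) \<noteq> (0, 0, 0)\<close> \<open>a = 0\<close> by auto
    ultimately have "tr \<beta> * (x * x ^ q) = c / e + \<delta>"
      by (simp add: eq_divide_eq mult.commute flip: add_eq_iff_eq_add)
    then have "x * x ^ q = n"
      using assms(5) by (simp add: n_def eq_divide_eq mult.commute)
    with Qx \<open>qform \<alpha> (tr \<beta>) x = 1\<close> show "Q \<in> ?contact ` {x. qform \<alpha> (tr \<beta>) x = 1 \<and> x * x ^ q = n}"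
      by blast
  qed
  then have "card (l \<inter> pedal (unitalAB q \<alpha> \<beta>) (ppt (0, \<delta>, 1)))
      \<le> card (?contact ` {x. qform \<alpha> (tr \<beta>) x = 1 \<and> x * x ^ q = n})"
    using finite_qform_eq_1_norm_eq[OF assms(4)] by (intro card_mono[rotated]) simp_all
  also have "\<dots> \<le> card {x. qform \<alpha> (tr \<beta>) x = 1 \<and> x * x ^ q = n}"
    using finite_qform_eq_1_norm_eq[OF assms(4)] by (rule card_image_le)
  also have "\<dots> \<le> 2"
    using assms(4) by (rule card_qform_eq_1_norm_eq_le_2)
  finally show ?thesis .
qed

end

lemma char2_conjugation_if_card_eq_square:
  fixes \<delta> :: "'a::{field,finite}"
  assumes "card (UNIV :: 'a set) = q ^ 2" and "q = 2 ^ h" and "h > 0" and "\<delta> ^ q = 1 + \<delta>"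
  shows "char2_conjugation q \<delta>"
proof
  have "CHAR('a) = 2"
    using assms(1-3) by (intro CHAR_eq_2_if_card_eq_power_2[of "h * 2"]) (simp_all flip: power_mult)
  then show "(2::'a) = 0"
    by (metis of_nat_CHAR of_nat_numeral)
  show "(x + y) ^ q = x ^ q + y ^ q" for x y :: 'a
    using \<open>CHAR('a) = 2\<close> assms(2) by (intro freshmans_dream') simp_all
  show "(x ^ q) ^ q = x" for x :: 'a
    using finite_field_power_card[of x] assms(1) by (simp add: power2_eq_square flip: power_mult)
qed (fact assms(4))

theorem lemma3p3:
  fixes q h :: nat and l :: "'a::{field,finite} vec3 set set" and \<alpha> \<beta> \<delta> v :: 'a
  assumes card: "card (UNIV :: 'a set) = q ^ 2"
    and qh: "q = 2 ^ h" and h2: "h \<ge> 2"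
    and delta_notq: "\<delta> ^ q \<noteq> \<delta>"
    and delta1: "\<delta> ^ q = 1 + \<delta>"
    and delta2: "\<delta> ^ 2 = v + \<delta>"
    and vq: "v ^ q = v" and v1: "v \<noteq> 1" and trv: "abs_trace h v = 1"
    and alpha0: "\<alpha> \<noteq> 0"
    and beta_notq: "\<beta> ^ q \<noteq> \<beta>"
    and tr0: "abs_trace h (\<alpha> ^ (q + 1) / (\<beta> ^ q + \<beta>) ^ 2) = 0"
    and line: "l \<in> plines" and Uinf: "ppt (1, 0, 0) \<in> l"
  shows "card (l \<inter> pedal (unitalAB q \<alpha> \<beta>) (ppt (0, \<delta>, 1))) \<le> 2"
proof -
  have "h > 0"
    using h2 by simp
  then interpret char2_conjugation q \<delta>
    using card qh delta1 by (intro char2_conjugation_if_card_eq_square)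
  have "v \<noteq> 0"
    using trv by (auto simp: abs_trace_def power_0_left)
  moreover have "tr \<beta> \<noteq> 0"
    using beta_notq by (simp add: tr_eq_0_iff)
  ultimately show ?thesis
    using card_line_through_infinite_point_inter_pedal_le_2 vq v1 alpha0 line Uinf by blast
qed

end
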